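(* Let $P$ be a program which is safe w.r.t. a mode $M$, let $\mathit{Eqs}$ be a conjunction of equations, and let $G_1$ be a goal without occurrences of disequations. For all goals $G_2$, if there exists a goal $(A',G')$ such that $A'$ is a non-basic atom which does not satisfy $M$ and $(\mathit{Eqs},G_1,G_2)\longmapsto^*_P(A',G')$, then there exists a goal $(A'',G'')$ such that $A''$ is a non-basic atom which does not satisfy $M$ and $(G_1,\mathit{Eqs},G_2)\longmapsto^*_P(A'',G'')$.
   Context: Predicate symbols $\mathit{true}$, $=$, $\neq$ are basic, all others non-basic. Basic atoms: $\mathit{true}$, $t_1=t_2$ (equation), $t_1\neq t_2$ (disequation); non-basic atoms $p(t_1,\dots,t_m)$, $p$ non-basic. A goal is a conjunction of atoms ("," associative, neutral element $\mathit{true}$). A clause $C$ is $A\leftarrow G$ with non-basic head $hd(C)$ and body $bd(C)$; a program is a set of clauses. All mgu's are relevant and idempotent. A variable $X$ is a local variable of goal $G$ in clause $H\leftarrow G_1,G,G_2$ iff $X\in vars(G)-vars(H,G_1,G_2)$. Operational semantics: (1) $(t_1=t_2,G)\longmapsto_P G\vartheta$ if $t_1,t_2$ unify with mgu $\vartheta$; (2) $(t_1\neq t_2,G)\longmapsto_P G$ if $t_1,t_2$ are not unifiable; (3) $(A,G)\longmapsto_P(bd(C),G)\vartheta$ if $A$ is non-basic, $C$ a renamed apart clause of $P$ and $\vartheta$ an mgu of $A$ and $hd(C)$; $\longmapsto^*_P$ is the reflexive-transitive closure. Modes: a mode for non-basic $p$ of arity $h$ is $p(m_1,\dots,m_h)$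 with $m_i\in\{+,?\}$; $t_i$ is an input argument iff $m_i=+$, and variables in input arguments are input variables; a mode for a program contains exactly one mode for each non-basic predicate occurring in it. An atom satisfies $M$ iff $M$ has a mode for its predicate and its input arguments are ground. A clause $C$ is safe w.r.t. $M$ iff each variable of each disequation $t_1\neq t_2$ in $bd(C)$ is an input variable of $hd(C)$ or a local variable of $t_1\neq t_2$ in $C$; a program is safe iff all its clauses are. *)

theory Defs
  imports Main "HOL-Library.Infinite_Typeclass"
begin

datatype ('f, 'v) trm = Var 'v | Fn 'f "('f, 'v) trm list"

fun tvars :: "('f, 'v) trm \<Rightarrow> 'v set" where
  "tvars (Var x) = {x}"
| "tvars (Fn f ts) = (\<Union>t\<in>set ts. tvars t)"

type_synonym ('f, 'v) subst = "'v \<Rightarrow> ('f, 'v) trm"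

fun tsubst :: "('f, 'v) subst \<Rightarrow> ('f, 'v) trm \<Rightarrow> ('f, 'v) trm" where
  "tsubst \<sigma> (Var x) = \<sigma> x"
| "tsubst \<sigma> (Fn f ts) = Fn f (map (tsubst \<sigma>) ts)"

definition ground :: "('f, 'v) trm \<Rightarrow> bool" where
  "ground t \<longleftrightarrow> tvars t = {}"

definition subst_comp :: "('f, 'v) subst \<Rightarrow> ('f, 'v) subst \<Rightarrow> ('f, 'v) subst" where
  "subst_comp \<sigma> \<tau> = (\<lambda>x. tsubst \<tau> (\<sigma> x))"

definition sdom :: "('f, 'v) subst \<Rightarrow> 'v set" where
  "sdom \<sigma> = {x. \<sigma> x \<noteq> Var x}"

definition svars :: "('f, 'v) subst \<Rightarrow> 'v set" where
  "svars \<sigma> = sdom \<sigma> \<union> (\<Union>x\<in>sdom \<sigma>. tvars (\<sigma> x))"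

definition unifier :: "('f, 'v) subst \<Rightarrow> ('f, 'v) trm list \<Rightarrow> ('f, 'v) trm list \<Rightarrow> bool" where
  "unifier \<sigma> ss ts \<longleftrightarrow> map (tsubst \<sigma>) ss = map (tsubst \<sigma>) ts"

definition unifiable :: "('f, 'v) trm list \<Rightarrow> ('f, 'v) trm list \<Rightarrow> bool" where
  "unifiable ss ts \<longleftrightarrow> (\<exists>\<sigma>. unifier \<sigma> ss ts)"

definition mgu :: "('f, 'v) subst \<Rightarrow> ('f, 'v) trm list \<Rightarrow> ('f, 'v) trm list \<Rightarrow> bool" where
  "mgu \<sigma> ss ts \<longleftrightarrow> unifier \<sigma> ss ts \<and>
     (\<forall>\<tau>. unifier \<tau> ss ts \<longrightarrow> (\<exists>\<gamma>. \<tau> = subst_comp \<sigma> \<gamma>))"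

definition rmgu :: "('f, 'v) subst \<Rightarrow> ('f, 'v) trm list \<Rightarrow> ('f, 'v) trm list \<Rightarrow> bool" where
  "rmgu \<sigma> ss ts \<longleftrightarrow> mgu \<sigma> ss ts \<and> subst_comp \<sigma> \<sigma> = \<sigma> \<and>
     svars \<sigma> \<subseteq> (\<Union>t\<in>set ss \<union> set ts. tvars t)"

text \<open>The atom \<open>true\<close> is the neutral element of conjunction; goals are lists
  of atoms and \<open>true\<close> is represented by the empty goal.\<close>
datatype ('p, 'f, 'v) atom =
    Eq "('f, 'v) trm" "('f, 'v) trm"
  | Neq "('f, 'v) trm" "('f, 'v) trm"
  | Pred 'p "('f, 'v) trm list"

type_synonym ('p, 'f, 'v) goal = "('p, 'f, 'v) atom list"

fun nonbasic :: "('p, 'f, 'v) atom \<Rightarrow> bool" where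
  "nonbasic (Pred p ts) = True"
| "nonbasic _ = False"

fun is_eq :: "('p, 'f, 'v) atom \<Rightarrow> bool" where
  "is_eq (Eq s t) = True"
| "is_eq _ = False"

fun is_neq :: "('p, 'f, 'v) atom \<Rightarrow> bool" where
  "is_neq (Neq s t) = True"
| "is_neq _ = False"

fun avars :: "('p, 'f, 'v) atom \<Rightarrow> 'v set" where
  "avars (Eq s t) = tvars s \<union> tvars t"
| "avars (Neq s t) = tvars s \<union> tvars t"
| "avars (Pred p ts) = (\<Union>t\<in>set ts. tvars t)"

definition gvars :: "('p, 'f, 'v) goal \<Rightarrow> 'v set" where
  "gvars G = (\<Union>a\<in>set G. avars a)"

fun asubst :: "('f, 'v) subst \<Rightarrow> ('p, 'f, 'v) atom \<Rightarrow> ('p, 'f, 'v) atom" where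
  "asubst \<sigma> (Eq s t) = Eq (tsubst \<sigma> s) (tsubst \<sigma> t)"
| "asubst \<sigma> (Neq s t) = Neq (tsubst \<sigma> s) (tsubst \<sigma> t)"
| "asubst \<sigma> (Pred p ts) = Pred p (map (tsubst \<sigma>) ts)"

definition gsubst :: "('f, 'v) subst \<Rightarrow> ('p, 'f, 'v) goal \<Rightarrow> ('p, 'f, 'v) goal" where
  "gsubst \<sigma> G = map (asubst \<sigma>) G"

datatype ('p, 'f, 'v) clause = Clause (hd_pred: 'p) (hd_args: "('f, 'v) trm list") (bd: "('p, 'f, 'v) goal")

type_synonym ('p, 'f, 'v) program = "('p, 'f, 'v) clause set"

definition cvars :: "('p, 'f, 'v) clause \<Rightarrow> 'v set" where
  "cvars C = (\<Union>t\<in>set (hd_args C). tvars t) \<union> gvars (bd C)"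

definition rename_clause :: "('v \<Rightarrow> 'v) \<Rightarrow> ('p, 'f, 'v) clause \<Rightarrow> ('p, 'f, 'v) clause" where
  "rename_clause \<rho> C =
     Clause (hd_pred C) (map (tsubst (Var \<circ> \<rho>)) (hd_args C)) (gsubst (Var \<circ> \<rho>) (bd C))"

inductive step :: "('p, 'f, 'v) program \<Rightarrow> ('p, 'f, 'v) goal \<Rightarrow> ('p, 'f, 'v) goal \<Rightarrow> bool" where
  eq_step: "rmgu \<theta> [s] [t] \<Longrightarrow> step P (Eq s t # G) (gsubst \<theta> G)"
| neq_step: "\<not> unifiable [s] [t] \<Longrightarrow> step P (Neq s t # G) G"
| pred_step: "\<lbrakk> C \<in> P; bij \<rho>; C' = rename_clause \<rho> C;
                cvars C' \<inter> gvars (Pred p ts # G) = {};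
                hd_pred C' = p; rmgu \<theta> ts (hd_args C') \<rbrakk>
              \<Longrightarrow> step P (Pred p ts # G) (gsubst \<theta> (bd C' @ G))"

abbreviation steps :: "('p, 'f, 'v) program \<Rightarrow> ('p, 'f, 'v) goal \<Rightarrow> ('p, 'f, 'v) goal \<Rightarrow> bool" where
  "steps P \<equiv> (step P)\<^sup>*\<^sup>*"

text \<open>A mode assigns to (some) predicate symbols of a given arity at most one mode,
  a list of flags of that length; \<open>True\<close> stands for \<open>+\<close> (input), \<open>False\<close> for \<open>?\<close>.\<close>
type_synonym 'p mode = "('p \<times> nat) \<Rightarrow> bool list option"

definition is_mode :: "'p mode \<Rightarrow> bool" where
  "is_mode M \<longleftrightarrow> (\<forall>p n ms. M (p, n) = Some ms \<longrightarrow> length ms = n)"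

definition input_vars :: "'p mode \<Rightarrow> 'p \<Rightarrow> ('f, 'v) trm list \<Rightarrow> 'v set" where
  "input_vars M p ts =
     (case M (p, length ts) of None \<Rightarrow> {}
      | Some ms \<Rightarrow> (\<Union>i\<in>{i. i < length ts \<and> ms ! i}. tvars (ts ! i)))"

fun satisfies :: "'p mode \<Rightarrow> ('p, 'f, 'v) atom \<Rightarrow> bool" where
  "satisfies M (Pred p ts) =
     (\<exists>ms. M (p, length ts) = Some ms \<and> (\<forall>i<length ts. ms ! i \<longrightarrow> ground (ts ! i)))"
| "satisfies M _ = False"

definition safe_clause :: "'p mode \<Rightarrow> ('p, 'f, 'v) clause \<Rightarrow> bool" where
  "safe_clause M C \<longleftrightarrow>
     (\<forall>G1 s t G2. bd C = G1 @ Neq s t # G2 \<longrightarrow>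
        (\<forall>X \<in> tvars s \<union> tvars t.
           X \<in> input_vars M (hd_pred C) (hd_args C) \<or>
           X \<notin> (\<Union>u\<in>set (hd_args C). tvars u) \<union> gvars G1 \<union> gvars G2))"

definition safe :: "'p mode \<Rightarrow> ('p, 'f, 'v) program \<Rightarrow> bool" where
  "safe M P \<longleftrightarrow> (\<forall>C\<in>P. safe_clause M C)"

end

theory Submission
  imports Defs
begin

text \<open>A derivation of \<open>Eqs, G1, G2\<close> that selects a non-basic atom must first resolve all
  of \<open>Eqs\<close>, which takes it to \<open>\<gamma>(G1, G2)\<close> for a most general unifier \<open>\<gamma>\<close> of \<open>Eqs\<close>.
  From there we simulate it step by step by a derivation of \<open>G1, Eqs, G2\<close> that keeps the
  equations pending: a goal \<open>\<gamma>(X, Y)\<close> of the original derivation, where \<open>\<gamma>\<close> is a most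
  general unifier of the pending equations \<open>E\<close> on the variables of \<open>X, Y\<close>, corresponds to
  the goal \<open>X, E, Y\<close>.  Resolving an equation or an atom commutes with solving the pending
  equations.  A disequation selected before them is decided in the same way, because its
  variables do not occur in them: \<open>G1\<close> contains no disequations, and by safety a
  disequation brought in by a clause body contains only input variables of the head, which
  are ground since the selected atom satisfies the mode, and variables local to it.  The
  simulation can only be stopped by a selected atom that violates the mode, which is what we
  want; and when the original derivation selects a violating atom \<open>\<gamma>(a)\<close>, the simulation
  selects \<open>a\<close>, which violates the mode as well, since instances of atoms satisfying the mode
  satisfy it.\<close>

section \<open>Substitutions\<close>

lemma tsubst_subst_comp [simp]: "tsubst (subst_comp \<sigma> \<tau>) t = tsubst \<tau> (tsubst \<sigma> t)"
  by (induction t) (auto simp: subst_comp_def)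

lemma subst_comp_apply: "subst_comp \<sigma> \<tau> x = tsubst \<tau> (\<sigma> x)"
  by (simp add: subst_comp_def)

lemma map_tsubst_subst_comp [simp]:
  "map (tsubst (subst_comp \<sigma> \<tau>)) ts = map (tsubst \<tau>) (map (tsubst \<sigma>) ts)"
  by simp

lemma subst_comp_assoc: "subst_comp (subst_comp \<sigma> \<tau>) \<upsilon> = subst_comp \<sigma> (subst_comp \<tau> \<upsilon>)"
  by (simp add: subst_comp_def fun_eq_iff flip: tsubst_subst_comp)

lemma tsubst_Var [simp]: "tsubst Var t = t"
  by (induction t) (auto simp: map_idI)

lemma subst_comp_Var [simp]: "subst_comp Var \<sigma> = \<sigma>" "subst_comp \<sigma> Var = \<sigma>"
  by (auto simp: subst_comp_def)

lemma finite_tvars [simp]: "finite (tvars t)"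
  by (induction t) auto

lemma tvars_tsubst: "tvars (tsubst \<sigma> t) = (\<Union>x\<in>tvars t. tvars (\<sigma> x))"
  by (induction t) auto

lemma tsubst_cong: "(\<And>x. x \<in> tvars t \<Longrightarrow> \<sigma> x = \<tau> x) \<Longrightarrow> tsubst \<sigma> t = tsubst \<tau> t"
  by (induction t) auto

lemma Var_if_notin_svars: "x \<notin> svars \<theta> \<Longrightarrow> \<theta> x = Var x"
  by (auto simp: svars_def sdom_def)

lemma tvars_tsubst_subset: "tvars (tsubst \<theta> t) \<subseteq> tvars t \<union> svars \<theta>"
proof -
  have "tvars (\<theta> x) \<subseteq> insert x (svars \<theta>)" for x
    by (cases "x \<in> sdom \<theta>") (auto simp: sdom_def svars_def)
  then show ?thesis
    unfolding tvars_tsubst by blast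
qed

lemma tsubst_id_if_disjoint: "tvars t \<inter> svars \<theta> = {} \<Longrightarrow> tsubst \<theta> t = t"
  using tsubst_cong[of t \<theta> Var] Var_if_notin_svars by fastforce

lemma tsubst_eq_imp_eq_on: "tsubst \<sigma> t = tsubst \<tau> t \<Longrightarrow> x \<in> tvars t \<Longrightarrow> \<sigma> x = \<tau> x"
  by (induction t) (auto simp: map_eq_conv)

lemma eq_on_tvars_image:
  assumes "\<And>x. x \<in> V \<Longrightarrow> tsubst \<tau> (\<theta> x) = tsubst \<sigma> (\<theta> x)" and "y \<in> (\<Union>x\<in>V. tvars (\<theta> x))"
  shows "\<tau> y = \<sigma> y"
proof -
  obtain x where "x \<in> V" "y \<in> tvars (\<theta> x)"
    using assms(2) by blast
  then show ?thesis
    using tsubst_eq_imp_eq_on[OF assms(1)] by blast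
qed

lemma size_tsubst_occurs:
  "x \<in> tvars t \<Longrightarrow> t \<noteq> Var x \<Longrightarrow> size (\<sigma> x) < size (tsubst \<sigma> t)"
proof (induction t)
  case (Fn f ts)
  then obtain u where u: "u \<in> set ts" "x \<in> tvars u"
    by auto
  have "size (\<sigma> x) \<le> size (tsubst \<sigma> u)"
    using Fn.IH[OF u] by (cases "u = Var x") auto
  also have "\<dots> \<le> size_list size (map (tsubst \<sigma>) ts)"
    using u(1) by (induction ts) auto
  finally show ?case
    by simp
qed simp

section \<open>Existence of relevant idempotent most general unifiers\<close>

abbreviation tvars_lists :: "('f, 'v) trm list \<Rightarrow> ('f, 'v) trm list \<Rightarrow> 'v set" where
  "tvars_lists ss ts \<equiv> \<Union>t\<in>set ss \<union> set ts. tvars t"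

lemma unifier_subst_comp: "unifier \<sigma> ss ts \<Longrightarrow> unifier (subst_comp \<sigma> \<tau>) ss ts"
  unfolding unifier_def by (metis map_tsubst_subst_comp)

lemma rmgu_unifier: "rmgu \<theta> ss ts \<Longrightarrow> unifier \<theta> ss ts"
  by (simp add: rmgu_def mgu_def)

lemma rmgu_swap: "rmgu \<theta> ss ts \<Longrightarrow> rmgu \<theta> ts ss"
  by (auto simp: rmgu_def mgu_def unifier_def)

lemma rmgu_single_iff: "rmgu \<theta> [s] [t] \<Longrightarrow> tsubst \<tau> s = tsubst \<tau> t \<longleftrightarrow> (\<exists>\<zeta>. \<tau> = subst_comp \<theta> \<zeta>)"
  by (auto simp: rmgu_def mgu_def unifier_def)

lemma unifier_if_eq_on:
  assumes "unifier \<sigma> ss ts" and "\<forall>x\<in>tvars_lists ss ts. \<sigma> x = subst_comp \<gamma> \<zeta> x"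
  shows "unifier \<zeta> (map (tsubst \<gamma>) ss) (map (tsubst \<gamma>) ts)"
proof -
  have "map (tsubst \<sigma>) us = map (tsubst \<zeta>) (map (tsubst \<gamma>) us)" if "set us \<subseteq> set ss \<union> set ts" for us
  proof -
    have "tsubst \<sigma> u = tsubst (subst_comp \<gamma> \<zeta>) u" if "u \<in> set us" for u
      using assms(2) \<open>set us \<subseteq> _\<close> that by (intro tsubst_cong) blast
    then show ?thesis
      by (simp add: map_eq_conv)
  qed
  then show ?thesis
    using assms(1) unfolding unifier_def by (metis Un_upper1 Un_upper2)
qed

lemma rmgu_transfer:
  assumes "rmgu \<theta> ss ts"
    and "\<And>\<sigma>. unifier \<sigma> ss' ts' \<longleftrightarrow> unifier \<sigma> ss ts"
    and "tvars_lists ss ts \<subseteq> tvars_lists ss' ts'"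
  shows "rmgu \<theta> ss' ts'"
  using assms unfolding rmgu_def mgu_def by blast

lemma tvars_tsubst_upd:
  "x \<notin> tvars t \<Longrightarrow> tvars (tsubst (Var(x := t)) u) \<subseteq> tvars u - {x} \<union> tvars t"
  unfolding tvars_tsubst by (auto split: if_splits)

lemma tsubst_upd_notin: "x \<notin> tvars u \<Longrightarrow> tsubst (Var(x := t)) u = u"
  using tsubst_cong[of u "Var(x := t)" Var] by fastforce

lemma mgu_Var_elim:
  fixes x :: 'v and t :: "('f, 'v) trm"
  defines "\<sigma> \<equiv> Var(x := t)"
  assumes x: "x \<notin> tvars t"
    and \<mu>: "mgu \<mu> (map (tsubst \<sigma>) ss) (map (tsubst \<sigma>) ts)"
  shows "mgu (subst_comp \<sigma> \<mu>) (Var x # ss) (t # ts)"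
proof -
  have absorb: "subst_comp \<sigma> \<tau> = \<tau>" if "\<tau> x = tsubst \<tau> t" for \<tau>
    using that by (auto simp: subst_comp_def \<sigma>_def)
  have "unifier (subst_comp \<sigma> \<mu>) (Var x # ss) (t # ts)"
  proof -
    have "map (tsubst \<mu>) (map (tsubst \<sigma>) ss) = map (tsubst \<mu>) (map (tsubst \<sigma>) ts)"
      using \<mu> by (simp add: mgu_def unifier_def)
    moreover have "tsubst \<sigma> t = t"
      using x by (simp add: \<sigma>_def tsubst_upd_notin)
    ultimately show ?thesis
      by (simp add: unifier_def subst_comp_apply \<sigma>_def)
  qed
  moreover have "\<exists>\<gamma>. \<tau> = subst_comp (subst_comp \<sigma> \<mu>) \<gamma>" if "unifier \<tau> (Var x # ss) (t # ts)" for \<tau>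
  proof -
    have \<tau>x: "\<tau> x = tsubst \<tau> t"
      using that by (simp add: unifier_def)
    have "unifier \<tau> (map (tsubst \<sigma>) ss) (map (tsubst \<sigma>) ts)"
      unfolding unifier_def map_tsubst_subst_comp[symmetric] absorb[OF \<tau>x]
      using that by (simp add: unifier_def)
    then obtain \<gamma> where "\<tau> = subst_comp \<mu> \<gamma>"
      using \<mu> by (auto simp: mgu_def)
    then show ?thesis
      using absorb[OF \<tau>x] by (metis subst_comp_assoc)
  qed
  ultimately show ?thesis
    by (simp add: mgu_def)
qed

lemma rmgu_Var_elim:
  fixes x :: 'v and t :: "('f, 'v) trm"
  defines "\<sigma> \<equiv> Var(x := t)"
  assumes x: "x \<notin> tvars t"
    and \<mu>: "rmgu \<mu> (map (tsubst \<sigma>) ss) (map (tsubst \<sigma>) ts)"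
  shows "rmgu (subst_comp \<sigma> \<mu>) (Var x # ss) (t # ts)"
proof -
  define \<theta> where "\<theta> = subst_comp \<sigma> \<mu>"
  have "svars \<mu> \<subseteq> (\<Union>u\<in>set ss \<union> set ts. tvars (tsubst \<sigma> u))"
    using \<mu> by (auto simp: rmgu_def)
  also have "\<dots> \<subseteq> tvars_lists ss ts \<union> tvars t - {x}"
    using tvars_tsubst_upd[OF x] x unfolding \<sigma>_def by blast
  finally have svars_\<mu>: "svars \<mu> \<subseteq> tvars_lists ss ts \<union> tvars t - {x}" .
  have tvars_\<theta>: "tvars (\<theta> y) \<subseteq> insert y (tvars t) \<union> svars \<mu> - {x}" for y
  proof -
    have "tvars (\<sigma> y) \<subseteq> insert y (tvars t) - {x}"
      using x by (auto simp: \<sigma>_def)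
    then show ?thesis
      using tvars_tsubst_subset[of \<mu> "\<sigma> y"] svars_\<mu> by (auto simp: \<theta>_def subst_comp_def)
  qed
  have "subst_comp \<theta> \<theta> = \<theta>"
  proof
    fix y
    have "subst_comp \<theta> \<theta> y = tsubst \<mu> (tsubst \<sigma> (\<theta> y))"
      unfolding subst_comp_def[of \<theta> \<theta>] by (simp add: \<theta>_def)
    also have "tsubst \<sigma> (\<theta> y) = \<theta> y"
      using tvars_\<theta>[of y] unfolding \<sigma>_def by (intro tsubst_upd_notin) blast
    also have "tsubst \<mu> (\<theta> y) = tsubst (subst_comp \<mu> \<mu>) (\<sigma> y)"
      by (simp add: \<theta>_def subst_comp_def[of \<sigma> \<mu>])
    also have "\<dots> = \<theta> y"
      using \<mu> by (simp add: rmgu_def \<theta>_def subst_comp_def[of \<sigma> \<mu>])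
    finally show "subst_comp \<theta> \<theta> y = \<theta> y" .
  qed
  moreover have "svars \<theta> \<subseteq> insert x (tvars t) \<union> tvars_lists ss ts"
  proof -
    have "sdom \<theta> \<subseteq> insert x (svars \<mu>)"
      by (auto simp: sdom_def svars_def \<theta>_def subst_comp_def \<sigma>_def)
    then have "svars \<theta> \<subseteq> insert x (tvars t \<union> svars \<mu>)"
      unfolding svars_def[of \<theta>] using tvars_\<theta> by blast
    then show ?thesis
      using svars_\<mu> by blast
  qed
  moreover have "mgu \<theta> (Var x # ss) (t # ts)"
    using mgu_Var_elim[OF x] \<mu> unfolding \<theta>_def \<sigma>_def rmgu_def by blast
  ultimately show ?thesis
    unfolding rmgu_def \<theta>_def by auto
qed

lemma unifier_Fn_Cons:
  "length us = length vs \<Longrightarrow>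
   unifier \<sigma> (Fn f us # ss) (Fn f vs # ts) \<longleftrightarrow> unifier \<sigma> (us @ ss) (vs @ ts)"
  by (auto simp: unifier_def)

lemma unifier_Var_Cons_elim:
  fixes x :: 'v and u :: "('f, 'v) trm"
  defines "\<sigma>x \<equiv> Var(x := u)"
  assumes \<sigma>: "unifier \<sigma> (Var x # us) (u # vs)" and u: "u \<noteq> Var x"
  shows "x \<notin> tvars u"
    and "unifier \<sigma> (map (tsubst \<sigma>x) us) (map (tsubst \<sigma>x) vs)"
    and "tvars_lists (map (tsubst \<sigma>x) us) (map (tsubst \<sigma>x) vs) \<subset> tvars_lists (Var x # us) (u # vs)"
proof -
  have \<sigma>_x: "\<sigma> x = tsubst \<sigma> u"
    using \<sigma> by (simp add: unifier_def)
  then show x: "x \<notin> tvars u"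
    using size_tsubst_occurs[of x u \<sigma>] u by (metis less_irrefl)
  have absorb: "subst_comp \<sigma>x \<sigma> = \<sigma>"
    using \<sigma>_x by (simp add: subst_comp_def \<sigma>x_def fun_eq_iff)
  show "unifier \<sigma> (map (tsubst \<sigma>x) us) (map (tsubst \<sigma>x) vs)"
    unfolding unifier_def map_tsubst_subst_comp[symmetric] absorb
    using \<sigma> by (simp add: unifier_def)
  have "tvars (tsubst \<sigma>x w) \<subseteq> tvars_lists (Var x # us) (u # vs) - {x}" if "w \<in> set us \<union> set vs" for w
    using tvars_tsubst_upd[OF x, of w] x that unfolding \<sigma>x_def by auto
  then have "tvars_lists (map (tsubst \<sigma>x) us) (map (tsubst \<sigma>x) vs) \<subseteq> tvars_lists (Var x # us) (u # vs) - {x}"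
    by auto
  moreover have "x \<in> tvars_lists (Var x # us) (u # vs)"
    by simp
  moreover have "A \<subseteq> B - {x} \<Longrightarrow> x \<in> B \<Longrightarrow> A \<subset> B" for A B :: "'v set"
    by blast
  ultimately show "tvars_lists (map (tsubst \<sigma>x) us) (map (tsubst \<sigma>x) vs) \<subset> tvars_lists (Var x # us) (u # vs)"
    by blast
qed

text \<open>One step of Martelli and Montanari's unification algorithm: the first equation is
  deleted, decomposed or eliminated, which leads to a problem with fewer variables, or
  with the same variables and smaller size.\<close>
lemma rmgu_exists_Cons:
  fixes ss ts :: "('f, 'v) trm list"
  assumes unif: "unifier \<sigma> (s # ss) (t # ts)"
    and smaller: "\<And>\<sigma>' (ss' :: ('f, 'v) trm list) ts'. unifier \<sigma>' ss' ts' \<Longrightarrow>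
      tvars_lists ss' ts' \<subset> tvars_lists (s # ss) (t # ts) \<or>
      tvars_lists ss' ts' \<subseteq> tvars_lists (s # ss) (t # ts) \<and>
        size_list size ss' + size_list size ts' < size_list size (s # ss) + size_list size (t # ts) \<Longrightarrow>
      \<exists>\<theta>. rmgu \<theta> ss' ts'"
  shows "\<exists>\<theta>. rmgu \<theta> (s # ss) (t # ts)"
proof -
  consider (same) "s = t"
    | (Var_left) x where "s = Var x" "t \<noteq> Var x"
    | (Var_right) x where "t = Var x" "s \<noteq> Var x"
    | (Fn) f us g vs where "s = Fn f us" "t = Fn g vs"
    by (cases s; cases t) auto
  then show ?thesis
  proof cases
    case same
    have unifiers: "unifier \<tau> (s # ss) (t # ts) \<longleftrightarrow> unifier \<tau> ss ts" for \<tau>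
      using same by (simp add: unifier_def)
    have vars: "tvars_lists ss ts \<subseteq> tvars_lists (s # ss) (t # ts)"
      by auto
    obtain \<theta> where "rmgu \<theta> ss ts"
      using smaller[OF unif[unfolded unifiers]] vars by auto
    then show ?thesis
      using rmgu_transfer[OF _ unifiers vars] by blast
  next
    case Var_left
    note elim = unifier_Var_Cons_elim[OF unif[unfolded Var_left(1)] Var_left(2)]
    obtain \<mu> where "rmgu \<mu> (map (tsubst (Var(x := t))) ss) (map (tsubst (Var(x := t))) ts)"
      using smaller[OF elim(2)] elim(3) Var_left(1) by blast
    then show ?thesis
      using rmgu_Var_elim[OF elim(1)] Var_left(1) by blast
  next
    case Var_right
    have "unifier \<sigma> (Var x # ts) (s # ss)"
      using unif Var_right(1) by (simp add: unifier_def)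
    note elim = unifier_Var_Cons_elim[OF this Var_right(2)]
    have "tvars_lists (map (tsubst (Var(x := s))) ts) (map (tsubst (Var(x := s))) ss) \<subset>
        tvars_lists (s # ss) (t # ts)"
      using elim(3) Var_right(1) by auto
    then obtain \<mu> where "rmgu \<mu> (map (tsubst (Var(x := s))) ts) (map (tsubst (Var(x := s))) ss)"
      using smaller[OF elim(2)] by blast
    then show ?thesis
      using rmgu_swap[OF rmgu_Var_elim[OF elim(1)]] Var_right(1) by blast
  next
    case Fn
    have "f = g" and len: "length us = length vs"
      using unif Fn unfolding unifier_def by (auto dest: map_eq_imp_length_eq)
    then have unifiers: "unifier \<tau> (s # ss) (t # ts) \<longleftrightarrow> unifier \<tau> (us @ ss) (vs @ ts)" for \<tau>
      using unifier_Fn_Cons[OF len] Fn by simp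
    have vars: "tvars_lists (us @ ss) (vs @ ts) \<subseteq> tvars_lists (s # ss) (t # ts)"
      using Fn by auto
    obtain \<theta> where "rmgu \<theta> (us @ ss) (vs @ ts)"
      using smaller[OF unif[unfolded unifiers]] vars Fn by auto
    then show ?thesis
      using rmgu_transfer[OF _ unifiers vars] by blast
  qed
qed

lemma rmgu_exists:
  fixes ss ts :: "('f, 'v) trm list"
  shows "unifier \<sigma> ss ts \<Longrightarrow> \<exists>\<theta>. rmgu \<theta> ss ts"
proof (induction "(card (tvars_lists ss ts), size_list size ss + size_list size ts)"
    arbitrary: ss ts \<sigma> rule: wf_induct_rule[OF wf_lex_prod[OF wf_less wf_less]])
  case (1 ss ts \<sigma>)
  show ?case
  proof (cases ss)
    case Nil
    then have "rmgu Var ss ts"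
      using "1.prems" by (simp add: rmgu_def mgu_def unifier_def svars_def sdom_def)
    then show ?thesis
      by blast
  next
    case (Cons s ss')
    then obtain t ts' where ts: "ts = t # ts'"
      using "1.prems" by (cases ts) (auto simp: unifier_def)
    have "\<exists>\<theta>. rmgu \<theta> ss'' ts''"
      if "unifier \<sigma>' ss'' ts''"
        and "tvars_lists ss'' ts'' \<subset> tvars_lists ss ts \<or>
          tvars_lists ss'' ts'' \<subseteq> tvars_lists ss ts \<and>
          size_list size ss'' + size_list size ts'' < size_list size ss + size_list size ts"
      for \<sigma>' and ss'' ts'' :: "('f, 'v) trm list"
    proof -
      from that(2) have "card (tvars_lists ss'' ts'') < card (tvars_lists ss ts) \<or>
          card (tvars_lists ss'' ts'') \<le> card (tvars_lists ss ts) \<and>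
          size_list size ss'' + size_list size ts'' < size_list size ss + size_list size ts"
      proof
        assume "tvars_lists ss'' ts'' \<subset> tvars_lists ss ts"
        then show ?thesis
          by (intro disjI1 psubset_card_mono) simp_all
      next
        assume "tvars_lists ss'' ts'' \<subseteq> tvars_lists ss ts \<and>
          size_list size ss'' + size_list size ts'' < size_list size ss + size_list size ts"
        then show ?thesis
          by (intro disjI2 conjI card_mono) simp_all
      qed
      then show ?thesis
        using "1.hyps"[OF _ that(1)]
        by (cases "card (tvars_lists ss'' ts'') < card (tvars_lists ss ts)") auto
    qed
    then show ?thesis
      using rmgu_exists_Cons[of \<sigma> s ss' t ts'] "1.prems" Cons ts by blast
  qed
qed

section \<open>Atoms and goals\<close>

lemma map_eq_append_Cons:
  "map f xs = A @ b # B \<Longrightarrow> \<exists>A0 b0 B0. xs = A0 @ b0 # B0 \<and> A = map f A0 \<and> b = f b0 \<and> B = map f B0"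
  by (auto simp: map_eq_append_conv map_eq_Cons_conv)

lemma append_eq_append_Cons:
  "xs @ ys = A @ b # B \<Longrightarrow>
   (\<exists>B1. xs = A @ b # B1 \<and> B = B1 @ ys) \<or> (\<exists>A2. ys = A2 @ b # B \<and> A = xs @ A2)"
proof (induction xs arbitrary: A)
  case (Cons x xs)
  then show ?case
    by (cases A) auto
qed auto

lemma asubst_subst_comp [simp]: "asubst (subst_comp \<sigma> \<tau>) a = asubst \<tau> (asubst \<sigma> a)"
  by (cases a) auto

lemma asubst_Var [simp]: "asubst Var a = a"
  by (cases a) (auto simp: map_idI)

lemma nonbasic_asubst [simp]: "nonbasic (asubst \<sigma> a) = nonbasic a"
  by (cases a) auto

lemma is_eq_asubst [simp]: "is_eq (asubst \<sigma> a) = is_eq a"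
  by (cases a) auto

lemma finite_avars [simp]: "finite (avars a)"
  by (cases a) auto

lemma asubst_cong: "(\<And>x. x \<in> avars a \<Longrightarrow> \<sigma> x = \<tau> x) \<Longrightarrow> asubst \<sigma> a = asubst \<tau> a"
  by (cases a) (auto intro!: tsubst_cong)

lemma avars_asubst: "avars (asubst \<sigma> a) = (\<Union>x\<in>avars a. tvars (\<sigma> x))"
  by (cases a) (auto simp: tvars_tsubst)

lemma satisfies_asubst: "satisfies M a \<Longrightarrow> satisfies M (asubst \<sigma> a)"
  by (cases a) (auto simp: ground_def tvars_tsubst)

lemma gsubst_simps [simp]:
  "gsubst \<sigma> [] = []"
  "gsubst \<sigma> (a # G) = asubst \<sigma> a # gsubst \<sigma> G"
  "gsubst \<sigma> (G @ H) = gsubst \<sigma> G @ gsubst \<sigma> H"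
  by (simp_all add: gsubst_def)

lemma gvars_simps [simp]:
  "gvars [] = {}"
  "gvars (a # G) = avars a \<union> gvars G"
  "gvars (G @ H) = gvars G \<union> gvars H"
  by (auto simp: gvars_def)

lemma gsubst_subst_comp [simp]: "gsubst (subst_comp \<sigma> \<tau>) G = gsubst \<tau> (gsubst \<sigma> G)"
  by (induction G) auto

lemma gsubst_Var [simp]: "gsubst Var G = G"
  by (induction G) auto

lemma finite_gvars [simp]: "finite (gvars G)"
  by (induction G) auto

lemma gsubst_cong: "(\<And>x. x \<in> gvars G \<Longrightarrow> \<sigma> x = \<tau> x) \<Longrightarrow> gsubst \<sigma> G = gsubst \<tau> G"
  by (induction G) (auto intro: asubst_cong)

lemma gvars_gsubst: "gvars (gsubst \<sigma> G) = (\<Union>x\<in>gvars G. tvars (\<sigma> x))"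
  by (induction G) (auto simp: avars_asubst)

lemma gvars_gsubst_subset: "gvars (gsubst \<theta> G) \<subseteq> gvars G \<union> svars \<theta>"
  using tvars_tsubst_subset[of \<theta> "Var _"] by (auto simp: gvars_gsubst)

lemma asubst_eq_Eq_iff:
  "asubst \<sigma> a = Eq u v \<longleftrightarrow> (\<exists>s t. a = Eq s t \<and> u = tsubst \<sigma> s \<and> v = tsubst \<sigma> t)"
  by (cases a) auto

lemma asubst_eq_Neq_iff:
  "asubst \<sigma> a = Neq u v \<longleftrightarrow> (\<exists>s t. a = Neq s t \<and> u = tsubst \<sigma> s \<and> v = tsubst \<sigma> t)"
  by (cases a) auto

lemma asubst_eq_Pred_iff:
  "asubst \<sigma> a = Pred p us \<longleftrightarrow> (\<exists>ts. a = Pred p ts \<and> us = map (tsubst \<sigma>) ts)"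
  by (cases a) auto

section \<open>Most general unifiers of equation goals\<close>

definition unifies_eqs :: "('f, 'v) subst \<Rightarrow> ('p, 'f, 'v) goal \<Rightarrow> bool" where
  "unifies_eqs \<sigma> E \<longleftrightarrow> (\<forall>s t. Eq s t \<in> set E \<longrightarrow> tsubst \<sigma> s = tsubst \<sigma> t)"

lemma unifies_eqs_simps [simp]:
  "unifies_eqs \<sigma> []"
  "unifies_eqs \<sigma> (Eq s t # E) \<longleftrightarrow> tsubst \<sigma> s = tsubst \<sigma> t \<and> unifies_eqs \<sigma> E"
  by (auto simp: unifies_eqs_def)

lemma unifies_eqs_subst_comp: "unifies_eqs \<sigma> E \<Longrightarrow> unifies_eqs (subst_comp \<sigma> \<tau>) E"
  by (simp add: unifies_eqs_def)

lemma unifies_eqs_gsubst: "unifies_eqs \<tau> (gsubst \<theta> E) \<longleftrightarrow> unifies_eqs (subst_comp \<theta> \<tau>) E"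
proof -
  have "Eq u v \<in> set (gsubst \<theta> E) \<longleftrightarrow> (\<exists>s t. Eq s t \<in> set E \<and> u = tsubst \<theta> s \<and> v = tsubst \<theta> t)"
    for u v
  proof
    assume "Eq u v \<in> set (gsubst \<theta> E)"
    then obtain a where "a \<in> set E" "asubst \<theta> a = Eq u v"
      by (auto simp: gsubst_def)
    then show "\<exists>s t. Eq s t \<in> set E \<and> u = tsubst \<theta> s \<and> v = tsubst \<theta> t"
      by (auto simp: asubst_eq_Eq_iff)
  next
    assume "\<exists>s t. Eq s t \<in> set E \<and> u = tsubst \<theta> s \<and> v = tsubst \<theta> t"
    then show "Eq u v \<in> set (gsubst \<theta> E)"
      by (auto simp: gsubst_def intro: rev_image_eqI)
  qed
  then show ?thesis
    unfolding unifies_eqs_def by (auto 4 4)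
qed

lemma unifies_eqs_cong:
  assumes "\<And>x. x \<in> gvars E \<Longrightarrow> \<sigma> x = \<tau> x"
  shows "unifies_eqs \<sigma> E \<longleftrightarrow> unifies_eqs \<tau> E"
proof -
  have "tsubst \<sigma> u = tsubst \<tau> u" if "Eq s t \<in> set E" "u \<in> {s, t}" for s t u
    using that assms by (intro tsubst_cong) (force simp: gvars_def)
  then show ?thesis
    unfolding unifies_eqs_def by (metis insertI1 insertI2)
qed

definition mgu_on :: "'v set \<Rightarrow> ('f, 'v) subst \<Rightarrow> ('p, 'f, 'v) goal \<Rightarrow> bool" where
  "mgu_on V \<gamma> E \<longleftrightarrow> unifies_eqs \<gamma> E \<and>
     (\<forall>\<tau>. unifies_eqs \<tau> E \<longrightarrow> (\<exists>\<zeta>. \<forall>x\<in>V. \<tau> x = subst_comp \<gamma> \<zeta> x))"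

lemma mgu_onD:
  assumes "mgu_on V \<gamma> E"
  shows "unifies_eqs \<gamma> E"
    and "unifies_eqs \<tau> E \<Longrightarrow> \<exists>\<zeta>. \<forall>x\<in>V. \<tau> x = subst_comp \<gamma> \<zeta> x"
  using assms by (auto simp: mgu_on_def)

lemma mgu_on_subset: "mgu_on V \<gamma> E \<Longrightarrow> W \<subseteq> V \<Longrightarrow> mgu_on W \<gamma> E"
  by (auto simp: mgu_on_def) blast

lemma mgu_on_Nil: "mgu_on V Var []"
  by (auto simp: mgu_on_def)

lemma mgu_on_Eq_ConsI:
  assumes \<theta>: "rmgu \<theta> [s] [t]" and \<eta>: "mgu_on (\<Union>x\<in>V. tvars (\<theta> x)) \<eta> (gsubst \<theta> E)"
  shows "mgu_on V (subst_comp \<theta> \<eta>) (Eq s t # E)"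
proof -
  have "\<exists>\<zeta>. \<forall>x\<in>V. \<tau> x = subst_comp (subst_comp \<theta> \<eta>) \<zeta> x" if \<tau>: "unifies_eqs \<tau> (Eq s t # E)" for \<tau>
  proof -
    obtain \<tau>' where \<tau>': "\<tau> = subst_comp \<theta> \<tau>'"
      using \<tau> rmgu_single_iff[OF \<theta>] by auto
    then have "unifies_eqs \<tau>' (gsubst \<theta> E)"
      using \<tau> by (simp add: unifies_eqs_gsubst)
    then obtain \<zeta> where "\<forall>y\<in>(\<Union>x\<in>V. tvars (\<theta> x)). \<tau>' y = subst_comp \<eta> \<zeta> y"
      using mgu_onD(2)[OF \<eta>] by blast
    then have "tsubst \<tau>' (\<theta> x) = tsubst (subst_comp \<eta> \<zeta>) (\<theta> x)" if "x \<in> V" for x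
      using that by (intro tsubst_cong) blast
    then have "\<forall>x\<in>V. \<tau> x = subst_comp (subst_comp \<theta> \<eta>) \<zeta> x"
      by (simp add: \<tau>' subst_comp_apply)
    then show ?thesis
      by blast
  qed
  moreover have "unifies_eqs (subst_comp \<theta> \<eta>) (Eq s t # E)"
    using mgu_onD(1)[OF \<eta>] rmgu_single_iff[OF \<theta>, of "subst_comp \<theta> \<eta>"]
    by (auto simp: unifies_eqs_gsubst)
  ultimately show ?thesis
    by (simp add: mgu_on_def)
qed

lemma mgu_on_Eq_ConsE:
  assumes \<theta>: "rmgu \<theta> [s] [t]" and \<gamma>: "mgu_on V \<gamma> (Eq s t # E)"
  obtains \<eta> where "\<gamma> = subst_comp \<theta> \<eta>" "mgu_on (\<Union>x\<in>V. tvars (\<theta> x)) \<eta> (gsubst \<theta> E)"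
proof -
  obtain \<eta> where \<eta>: "\<gamma> = subst_comp \<theta> \<eta>"
    using \<gamma> rmgu_single_iff[OF \<theta>] by (auto simp: mgu_on_def)
  have "\<exists>\<zeta>. \<forall>y\<in>(\<Union>x\<in>V. tvars (\<theta> x)). \<tau> y = subst_comp \<eta> \<zeta> y"
    if "unifies_eqs \<tau> (gsubst \<theta> E)" for \<tau>
  proof -
    have "unifies_eqs (subst_comp \<theta> \<tau>) (Eq s t # E)"
      using that rmgu_single_iff[OF \<theta>, of "subst_comp \<theta> \<tau>"] by (auto simp: unifies_eqs_gsubst)
    then obtain \<zeta> where "\<forall>x\<in>V. subst_comp \<theta> \<tau> x = subst_comp \<gamma> \<zeta> x"
      using mgu_onD(2)[OF \<gamma>] by blast
    then have "tsubst \<tau> (\<theta> x) = tsubst (subst_comp \<eta> \<zeta>) (\<theta> x)" if "x \<in> V" for x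
      using that by (simp add: \<eta> subst_comp_apply)
    then show ?thesis
      by (intro exI[of _ \<zeta>] ballI eq_on_tvars_image)
  qed
  moreover have "unifies_eqs \<eta> (gsubst \<theta> E)"
    using mgu_onD(1)[OF \<gamma>] by (simp add: unifies_eqs_gsubst \<eta>)
  ultimately have "mgu_on (\<Union>x\<in>V. tvars (\<theta> x)) \<eta> (gsubst \<theta> E)"
    by (simp add: mgu_on_def)
  then show ?thesis
    using that \<eta> by blast
qed

lemma mgu_on_rename_apart:
  assumes \<gamma>: "mgu_on V \<gamma> E" and W: "W \<inter> (V \<union> gvars E) = {}" and f: "inj_on f W"
    and fresh: "f ` W \<inter> (\<Union>x\<in>V. tvars (\<gamma> x)) = {}"
  shows "mgu_on (V \<union> W) (\<lambda>x. if x \<in> W then Var (f x) else \<gamma> x) E"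
proof -
  let ?\<gamma>' = "\<lambda>x. if x \<in> W then Var (f x) else \<gamma> x"
  have "unifies_eqs ?\<gamma>' E \<longleftrightarrow> unifies_eqs \<gamma> E"
    using W by (intro unifies_eqs_cong) auto
  moreover have "\<exists>\<zeta>. \<forall>x\<in>V \<union> W. \<tau> x = subst_comp ?\<gamma>' \<zeta> x" if \<tau>: "unifies_eqs \<tau> E" for \<tau>
  proof -
    obtain \<zeta> where \<zeta>: "\<forall>x\<in>V. \<tau> x = subst_comp \<gamma> \<zeta> x"
      using mgu_onD(2)[OF \<gamma> \<tau>] by blast
    define \<zeta>' where "\<zeta>' y = (if y \<in> f ` W then \<tau> (inv_into W f y) else \<zeta> y)" for y
    have "\<tau> x = subst_comp ?\<gamma>' \<zeta>' x" if "x \<in> V \<union> W" for x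
    proof (cases "x \<in> W")
      case True
      then show ?thesis
        using f by (simp add: \<zeta>'_def subst_comp_apply)
    next
      case False
      then have "x \<in> V"
        using that by blast
      have "tsubst \<zeta>' (\<gamma> x) = tsubst \<zeta> (\<gamma> x)"
        using fresh \<open>x \<in> V\<close> by (intro tsubst_cong) (auto simp: \<zeta>'_def)
      then show ?thesis
        using \<zeta> \<open>x \<in> V\<close> False by (simp add: subst_comp_apply)
    qed
    then show ?thesis
      by blast
  qed
  ultimately show ?thesis
    using mgu_onD(1)[OF \<gamma>] by (simp add: mgu_on_def)
qed

text \<open>Resolution commutes with solving pending equations: solving \<open>E\<close> by \<open>\<gamma>\<close> and then
  unifying the \<open>\<gamma>\<close>-instances of \<open>ss\<close> and \<open>ts\<close> by \<open>\<theta>'\<close> is the same as unifying \<open>ss\<close> and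
  \<open>ts\<close> by \<open>\<theta>\<close> and then solving the \<open>\<theta>\<close>-instance of \<open>E\<close> by \<open>\<eta>\<close>.\<close>
lemma mgu_on_resolve:
  assumes \<gamma>: "mgu_on V \<gamma> E" and \<theta>: "rmgu \<theta> ss ts"
    and \<theta>': "rmgu \<theta>' (map (tsubst \<gamma>) ss) (map (tsubst \<gamma>) ts)"
    and vars: "tvars_lists ss ts \<subseteq> V"
  obtains \<eta> where "subst_comp \<gamma> \<theta>' = subst_comp \<theta> \<eta>"
    "mgu_on (\<Union>x\<in>V. tvars (\<theta> x)) \<eta> (gsubst \<theta> E)"
proof -
  have "unifier (subst_comp \<gamma> \<theta>') ss ts"
    using \<theta>' by (simp add: rmgu_def mgu_def unifier_def)
  then obtain \<eta> where \<eta>: "subst_comp \<gamma> \<theta>' = subst_comp \<theta> \<eta>"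
    using \<theta> by (auto simp: rmgu_def mgu_def)
  have "unifies_eqs (subst_comp \<theta> \<eta>) E"
    using unifies_eqs_subst_comp[OF mgu_onD(1)[OF \<gamma>]] by (simp flip: \<eta>)
  then have "unifies_eqs \<eta> (gsubst \<theta> E)"
    by (simp add: unifies_eqs_gsubst)
  moreover have "\<exists>\<zeta>. \<forall>y\<in>(\<Union>x\<in>V. tvars (\<theta> x)). \<tau> y = subst_comp \<eta> \<zeta> y"
    if \<tau>: "unifies_eqs \<tau> (gsubst \<theta> E)" for \<tau>
  proof -
    obtain \<zeta>0 where \<zeta>0: "\<forall>x\<in>V. subst_comp \<theta> \<tau> x = subst_comp \<gamma> \<zeta>0 x"
      using mgu_onD(2)[OF \<gamma>] \<tau> by (auto simp: unifies_eqs_gsubst)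
    then have "unifier \<zeta>0 (map (tsubst \<gamma>) ss) (map (tsubst \<gamma>) ts)"
      using unifier_if_eq_on[OF unifier_subst_comp[OF rmgu_unifier[OF \<theta>]]] vars by blast
    then obtain \<zeta> where \<zeta>: "\<zeta>0 = subst_comp \<theta>' \<zeta>"
      using \<theta>' by (auto simp: rmgu_def mgu_def)
    have "tsubst \<tau> (\<theta> x) = tsubst (subst_comp \<eta> \<zeta>) (\<theta> x)" if "x \<in> V" for x
    proof -
      have "tsubst \<tau> (\<theta> x) = tsubst \<zeta> (subst_comp \<gamma> \<theta>' x)"
        using \<zeta>0 that by (simp add: \<zeta> subst_comp_apply)
      then show ?thesis
        by (simp add: \<eta> subst_comp_apply)
    qed
    then show ?thesis
      by (intro exI[of _ \<zeta>] ballI eq_on_tvars_image)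
  qed
  ultimately have "mgu_on (\<Union>x\<in>V. tvars (\<theta> x)) \<eta> (gsubst \<theta> E)"
    by (simp add: mgu_on_def)
  then show ?thesis
    using that \<eta> by blast
qed

section \<open>Renaming clauses apart\<close>

lemma finite_cvars [simp]: "finite (cvars C)"
  by (simp add: cvars_def)

lemma ex_bij_image_disjoint:
  fixes S T :: "'v::infinite set"
  assumes "finite S" "finite T"
  obtains \<rho> where "bij \<rho>" "\<rho> ` S \<inter> T = {}"
proof -
  have "infinite (UNIV - (S \<union> T))"
    using assms by (simp add: Diff_infinite_finite infinite_UNIV)
  then obtain D where D: "finite D" "card D = card S" "D \<subseteq> UNIV - (S \<union> T)"
    using infinite_arbitrarily_large by blast
  obtain f where f: "bij_betw f S D"
    using finite_same_card_bij[OF assms(1) D(1)] D(2) by auto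
  define \<rho> where "\<rho> x = (if x \<in> S then f x else if x \<in> D then inv_into S f x else x)" for x
  have fS: "f ` S = D" "inj_on f S"
    using f by (auto simp: bij_betw_def)
  have "\<rho> (\<rho> x) = x" for x
  proof -
    consider "x \<in> S" | "x \<in> D" | "x \<notin> S" "x \<notin> D"
      by blast
    then show ?thesis
    proof cases
      case 1
      then show ?thesis
        using fS D(3) by (auto simp: \<rho>_def)
    next
      case 2
      then have "x \<notin> S" "inv_into S f x \<in> S"
        using D(3) fS(1) by (blast, metis inv_into_into)
      then show ?thesis
        using 2 fS f_inv_into_f[of x f S] by (simp add: \<rho>_def)
    qed (simp add: \<rho>_def)
  qed
  then have "bij \<rho>"
    by (intro o_bij[of \<rho> \<rho>]) (auto simp: fun_eq_iff)
  moreover have "\<rho> ` S \<inter> T = {}"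
    using fS D(3) by (auto simp: \<rho>_def)
  ultimately show ?thesis
    using that by blast
qed

lemma tvars_rename: "tvars (tsubst (Var \<circ> \<rho>) t) = \<rho> ` tvars t"
  by (induction t) auto

lemma gvars_rename: "gvars (gsubst (Var \<circ> \<rho>) G) = \<rho> ` gvars G"
  by (auto simp: gvars_gsubst)

lemma rename_clause_simps [simp]:
  "hd_pred (rename_clause \<rho> C) = hd_pred C"
  "hd_args (rename_clause \<rho> C) = map (tsubst (Var \<circ> \<rho>)) (hd_args C)"
  "bd (rename_clause \<rho> C) = gsubst (Var \<circ> \<rho>) (bd C)"
  by (simp_all add: rename_clause_def)

lemma cvars_rename_clause: "cvars (rename_clause \<rho> C) = \<rho> ` cvars C"
  by (auto simp: cvars_def tvars_rename gvars_rename)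

lemma tsubst_rename: "tsubst \<sigma> (tsubst (Var \<circ> \<rho>) t) = tsubst (\<sigma> \<circ> \<rho>) t"
  by (induction t) auto

lemma asubst_rename: "asubst \<sigma> (asubst (Var \<circ> \<rho>) a) = asubst (\<sigma> \<circ> \<rho>) a"
  by (cases a) (simp_all add: tsubst_rename)

lemma gsubst_rename: "gsubst \<sigma> (gsubst (Var \<circ> \<rho>) G) = gsubst (\<sigma> \<circ> \<rho>) G"
  unfolding gsubst_def by (simp add: asubst_rename)

lemma rename_clause_subst:
  assumes "\<And>y. y \<in> cvars C \<Longrightarrow> \<sigma> (\<rho> y) = \<sigma>' (\<rho>' y)"
  shows "map (tsubst \<sigma>) (hd_args (rename_clause \<rho> C)) = map (tsubst \<sigma>') (hd_args (rename_clause \<rho>' C))"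
    and "gsubst \<sigma> (bd (rename_clause \<rho> C)) = gsubst \<sigma>' (bd (rename_clause \<rho>' C))"
proof -
  have "tsubst (\<sigma> \<circ> \<rho>) u = tsubst (\<sigma>' \<circ> \<rho>') u" if "u \<in> set (hd_args C)" for u
    using that assms by (intro tsubst_cong) (auto simp: cvars_def)
  then show "map (tsubst \<sigma>) (hd_args (rename_clause \<rho> C)) = map (tsubst \<sigma>') (hd_args (rename_clause \<rho>' C))"
    by (simp add: tsubst_rename)
  have "gsubst (\<sigma> \<circ> \<rho>) (bd C) = gsubst (\<sigma>' \<circ> \<rho>') (bd C)"
    using assms by (intro gsubst_cong) (auto simp: cvars_def)
  then show "gsubst \<sigma> (bd (rename_clause \<rho> C)) = gsubst \<sigma>' (bd (rename_clause \<rho>' C))"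
    by (simp add: gsubst_rename)
qed

lemma input_vars_rename: "input_vars M p (map (tsubst (Var \<circ> \<rho>)) ts) = \<rho> ` input_vars M p ts"
  by (auto simp: input_vars_def tvars_rename split: option.splits)

lemma mgu_on_rename_clause_apart:
  fixes C :: "('p, 'f, 'v::infinite) clause"
  assumes \<gamma>: "mgu_on V \<gamma> E" and \<rho>': "bij \<rho>'"
    and fresh': "cvars (rename_clause \<rho>' C) \<inter> (\<Union>x\<in>V. tvars (\<gamma> x)) = {}"
    and R: "finite R" "V \<union> gvars E \<subseteq> R"
  obtains \<rho> \<gamma>' where "bij \<rho>" "cvars (rename_clause \<rho> C) \<inter> R = {}"
    "mgu_on (V \<union> cvars (rename_clause \<rho> C)) \<gamma>' E" "\<forall>x\<in>V. \<gamma>' x = \<gamma> x"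
    "map (tsubst \<gamma>') (hd_args (rename_clause \<rho> C)) = hd_args (rename_clause \<rho>' C)"
    "gsubst \<gamma>' (bd (rename_clause \<rho> C)) = bd (rename_clause \<rho>' C)"
proof -
  obtain \<rho> where \<rho>: "bij \<rho>" and "\<rho> ` cvars C \<inter> R = {}"
    using ex_bij_image_disjoint[OF finite_cvars R(1)] by blast
  then have fresh: "cvars (rename_clause \<rho> C) \<inter> R = {}"
    by (simp add: cvars_rename_clause)
  let ?W = "cvars (rename_clause \<rho> C)"
  define f where "f = \<rho>' \<circ> inv \<rho>"
  define \<gamma>' where "\<gamma>' x = (if x \<in> ?W then Var (f x) else \<gamma> x)" for x
  have W: "?W = \<rho> ` cvars C" and W': "f ` ?W = cvars (rename_clause \<rho>' C)"
    using \<rho> by (auto simp: cvars_rename_clause f_def image_comp bij_is_inj)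
  have "inj_on f ?W"
    unfolding f_def using bij_comp[OF bij_imp_bij_inv[OF \<rho>] \<rho>'] by (metis bij_is_inj inj_on_subset subset_UNIV)
  moreover have "?W \<inter> (V \<union> gvars E) = {}"
    using fresh R(2) by blast
  ultimately have "mgu_on (V \<union> ?W) \<gamma>' E"
    unfolding \<gamma>'_def using mgu_on_rename_apart[OF \<gamma>] fresh' W' by simp
  moreover have "\<forall>x\<in>V. \<gamma>' x = \<gamma> x"
    using fresh R(2) by (auto simp: \<gamma>'_def)
  moreover have "\<gamma>' (\<rho> y) = Var (\<rho>' y)" if "y \<in> cvars C" for y
    using that \<rho> W by (auto simp: \<gamma>'_def f_def bij_is_inj)
  then have "map (tsubst \<gamma>') (hd_args (rename_clause \<rho> C)) = hd_args (rename_clause \<rho>' C)"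
    and "gsubst \<gamma>' (bd (rename_clause \<rho> C)) = bd (rename_clause \<rho>' C)"
    using rename_clause_subst[of C \<gamma>' \<rho> Var \<rho>'] by auto
  ultimately show ?thesis
    using that \<rho> fresh by blast
qed

section \<open>Safety and local disequations\<close>

lemma safe_clause_rename:
  assumes "safe_clause M C" "bij \<rho>"
  shows "safe_clause M (rename_clause \<rho> C)"
  unfolding safe_clause_def
proof (intro allI impI ballI)
  fix A s t B x
  assume dec: "bd (rename_clause \<rho> C) = A @ Neq s t # B" and x: "x \<in> tvars s \<union> tvars t"
  then have "map (asubst (Var \<circ> \<rho>)) (bd C) = A @ Neq s t # B"
    by (simp add: gsubst_def)
  then obtain A0 b0 B0 where C: "bd C = A0 @ b0 # B0" and b0: "Neq s t = asubst (Var \<circ> \<rho>) b0"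
    and A: "A = gsubst (Var \<circ> \<rho>) A0" and B: "B = gsubst (Var \<circ> \<rho>) B0"
    unfolding gsubst_def by (blast dest: map_eq_append_Cons)
  then obtain s0 t0 where "b0 = Neq s0 t0"
    and st: "s = tsubst (Var \<circ> \<rho>) s0" "t = tsubst (Var \<circ> \<rho>) t0"
    using b0[symmetric] unfolding asubst_eq_Neq_iff by blast
  from x obtain x0 where x0: "x = \<rho> x0" "x0 \<in> tvars s0 \<union> tvars t0"
    using st by (auto simp: tvars_rename)
  have "x0 \<in> input_vars M (hd_pred C) (hd_args C) \<or>
      x0 \<notin> (\<Union>u\<in>set (hd_args C). tvars u) \<union> gvars A0 \<union> gvars B0"
    using assms(1) C \<open>b0 = Neq s0 t0\<close> x0(2) unfolding safe_clause_def by blast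
  moreover have "(\<Union>u\<in>set (hd_args (rename_clause \<rho> C)). tvars u) \<union> gvars A \<union> gvars B =
      \<rho> ` ((\<Union>u\<in>set (hd_args C). tvars u) \<union> gvars A0 \<union> gvars B0)"
    by (auto simp: A B tvars_rename gvars_rename)
  moreover have "inj \<rho>"
    using assms(2) by (rule bij_is_inj)
  ultimately show "x \<in> input_vars M (hd_pred (rename_clause \<rho> C)) (hd_args (rename_clause \<rho> C)) \<or>
      x \<notin> (\<Union>u\<in>set (hd_args (rename_clause \<rho> C)). tvars u) \<union> gvars A \<union> gvars B"
    unfolding x0(1) rename_clause_simps input_vars_rename by (simp add: inj_image_mem_iff)
qed

lemma input_vars_ground:
  assumes "satisfies M (Pred p ts)" and "unifier \<theta> ts hs" and "x \<in> input_vars M p hs"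
  shows "tvars (\<theta> x) = {}"
proof -
  have len: "length ts = length hs"
    using assms(2) unfolding unifier_def by (metis length_map)
  obtain ms where ms: "M (p, length ts) = Some ms" "\<forall>i<length ts. ms ! i \<longrightarrow> ground (ts ! i)"
    using assms(1) by auto
  obtain i where i: "i < length hs" "ms ! i" "x \<in> tvars (hs ! i)"
    using assms(3) ms(1) len by (auto simp: input_vars_def)
  have "tsubst \<theta> (hs ! i) = tsubst \<theta> (ts ! i)"
    using assms(2) i(1) len unfolding unifier_def by (metis nth_map)
  also have "\<dots> = ts ! i"
    using ms(2) i len by (simp add: ground_def tsubst_id_if_disjoint)
  finally have "tvars (tsubst \<theta> (hs ! i)) = {}"
    using ms(2) i len by (simp add: ground_def)
  then show ?thesis
    using i(3) by (auto simp: tvars_tsubst)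
qed

definition neqs_local :: "('p, 'f, 'v) goal \<Rightarrow> ('p, 'f, 'v) goal \<Rightarrow> bool" where
  "neqs_local X E \<longleftrightarrow>
     (\<forall>A s t B. X = A @ Neq s t # B \<longrightarrow> (tvars s \<union> tvars t) \<inter> gvars (A @ B @ E) = {})"

lemma neqs_local_if_no_neqs: "\<forall>a\<in>set X. \<not> is_neq a \<Longrightarrow> neqs_local X E"
  unfolding neqs_local_def by (metis in_set_conv_decomp is_neq.simps(1))

lemma neqs_local_ConsD:
  "neqs_local (a # X) E \<Longrightarrow> X = A @ Neq s t # B \<Longrightarrow>
   (tvars s \<union> tvars t) \<inter> (avars a \<union> gvars (A @ B @ E)) = {}"
  unfolding neqs_local_def by (metis Un_assoc append_Cons gvars_simps(2))

lemma neqs_local_Cons: "neqs_local (a # X) E \<Longrightarrow> neqs_local X E"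
  using neqs_local_ConsD unfolding neqs_local_def[of X] by blast

lemma neqs_local_gsubst:
  assumes "\<And>A s t B. X = A @ Neq s t # B \<Longrightarrow>
    (tvars (tsubst \<theta> s) \<union> tvars (tsubst \<theta> t)) \<inter> gvars (gsubst \<theta> (A @ B @ E)) = {}"
  shows "neqs_local (gsubst \<theta> X) (gsubst \<theta> E)"
  unfolding neqs_local_def
proof (intro allI impI)
  fix A s t B
  assume "gsubst \<theta> X = A @ Neq s t # B"
  then have "map (asubst \<theta>) X = A @ Neq s t # B"
    by (simp add: gsubst_def)
  then obtain A0 b0 B0 where X: "X = A0 @ b0 # B0" and b0: "Neq s t = asubst \<theta> b0"
    and "A = gsubst \<theta> A0" "B = gsubst \<theta> B0"
    unfolding gsubst_def by (blast dest: map_eq_append_Cons)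
  moreover obtain s0 t0 where "b0 = Neq s0 t0" "s = tsubst \<theta> s0" "t = tsubst \<theta> t0"
    using b0[symmetric] unfolding asubst_eq_Neq_iff by blast
  ultimately show "(tvars s \<union> tvars t) \<inter> gvars (A @ B @ gsubst \<theta> E) = {}"
    using assms by simp
qed

text \<open>The disequations of \<open>X\<close> stay local because \<open>\<theta>\<close> only binds variables of \<open>a\<close>
  and of the clause renamed apart, whose variables \<open>Z\<close> are fresh.\<close>
lemma neqs_local_resolvent:
  assumes local: "neqs_local (a # X) E"
    and svars: "svars \<theta> \<subseteq> avars a \<union> Z"
    and fresh: "(gvars B \<union> Z) \<inter> gvars (X @ E) = {}"
    and body: "\<And>A s t B'. B = A @ Neq s t # B' \<Longrightarrow>
      (tvars (tsubst \<theta> s) \<union> tvars (tsubst \<theta> t)) \<inter> gvars (gsubst \<theta> (A @ B' @ X @ E)) = {}"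
  shows "neqs_local (gsubst \<theta> (B @ X)) (gsubst \<theta> E)"
proof (rule neqs_local_gsubst)
  fix A s t B'
  assume "B @ X = A @ Neq s t # B'"
  then consider (in_body) B1 where "B = A @ Neq s t # B1" "B' = B1 @ X"
    | (in_tail) A2 where "X = A2 @ Neq s t # B'" "A = B @ A2"
    by (blast dest: append_eq_append_Cons)
  then show "(tvars (tsubst \<theta> s) \<union> tvars (tsubst \<theta> t)) \<inter> gvars (gsubst \<theta> (A @ B' @ E)) = {}"
  proof cases
    case in_body
    then show ?thesis
      using body by simp
  next
    case in_tail
    let ?V = "tvars s \<union> tvars t"
    have local_st: "?V \<inter> (avars a \<union> gvars (A2 @ B' @ E)) = {}"
      using neqs_local_ConsD[OF local in_tail(1)] .
    have "?V \<subseteq> gvars X"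
      using in_tail(1) by auto
    then have fresh_st: "?V \<inter> (gvars B \<union> Z) = {}"
      using fresh unfolding gvars_simps by blast
    then have "tsubst \<theta> s = s" "tsubst \<theta> t = t"
      using local_st svars by (auto intro!: tsubst_id_if_disjoint)
    moreover have "gvars (gsubst \<theta> (A @ B' @ E)) \<subseteq> gvars B \<union> gvars (A2 @ B' @ E) \<union> avars a \<union> Z"
      using gvars_gsubst_subset[of \<theta> "A @ B' @ E"] svars in_tail(2) by auto
    ultimately show ?thesis
      using local_st fresh_st by auto
  qed
qed

text \<open>Safety: a disequation of a clause body only mentions input variables of the head,
  which become ground when the head is unified with an atom satisfying the mode, and
  variables local to it.\<close>
lemma neqs_local_body:
  assumes safe: "safe_clause M C" and sat: "satisfies M (Pred (hd_pred C) ts)"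
    and \<theta>: "rmgu \<theta> ts (hd_args C)"
    and fresh: "cvars C \<inter> gvars (Pred (hd_pred C) ts # R) = {}"
    and C: "bd C = A @ Neq s t # B"
  shows "(tvars (tsubst \<theta> s) \<union> tvars (tsubst \<theta> t)) \<inter> gvars (gsubst \<theta> (A @ B @ R)) = {}"
proof -
  let ?H = "\<Union>u\<in>set (hd_args C). tvars u"
  let ?V = "tvars s \<union> tvars t"
  define L where "L = ?V - (?H \<union> gvars A \<union> gvars B)"
  have V: "?V \<subseteq> cvars C"
    using C by (auto simp: cvars_def)
  have "svars \<theta> \<subseteq> (\<Union>u\<in>set ts. tvars u) \<union> ?H"
    using \<theta> by (simp add: rmgu_def)
  then have L_fixed: "L \<inter> svars \<theta> = {}"
    using V fresh by (auto simp: L_def)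
  have "tvars (\<theta> x) \<subseteq> L" if "x \<in> ?V" for x
  proof (cases "x \<in> input_vars M (hd_pred C) (hd_args C)")
    case True
    then show ?thesis
      using input_vars_ground[OF sat rmgu_unifier[OF \<theta>]] by simp
  next
    case False
    then have "x \<in> L"
      using safe C that unfolding safe_clause_def L_def by blast
    then show ?thesis
      using L_fixed Var_if_notin_svars by fastforce
  qed
  then have "tvars (tsubst \<theta> s) \<union> tvars (tsubst \<theta> t) \<subseteq> L"
    by (auto simp: tvars_tsubst)
  moreover have "L \<inter> gvars R = {}"
    using V fresh by (auto simp: L_def)
  then have "L \<inter> gvars (gsubst \<theta> (A @ B @ R)) = {}"
    using gvars_gsubst_subset[of \<theta> "A @ B @ R"] L_fixed by (auto simp: L_def)
  ultimately show ?thesis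
    by blast
qed

lemma neqs_local_clause_resolvent:
  assumes safe: "safe_clause M C" and sat: "satisfies M (Pred (hd_pred C) ts)"
    and \<theta>: "rmgu \<theta> ts (hd_args C)"
    and fresh: "cvars C \<inter> gvars (Pred (hd_pred C) ts # X @ E) = {}"
    and local: "neqs_local (Pred (hd_pred C) ts # X) E"
  shows "neqs_local (gsubst \<theta> (bd C @ X)) (gsubst \<theta> E)"
proof (rule neqs_local_resolvent[OF local])
  show "svars \<theta> \<subseteq> avars (Pred (hd_pred C) ts) \<union> cvars C"
    using \<theta> by (auto simp: rmgu_def cvars_def)
  show "(gvars (bd C) \<union> cvars C) \<inter> gvars (X @ E) = {}"
    using fresh by (auto simp: cvars_def)
  show "(tvars (tsubst \<theta> s) \<union> tvars (tsubst \<theta> t)) \<inter> gvars (gsubst \<theta> (A @ B @ X @ E)) = {}"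
    if "bd C = A @ Neq s t # B" for A s t B
    by (rule neqs_local_body[OF safe sat \<theta> fresh that])
qed

section \<open>Delayed equations\<close>

lemma step_EqE:
  assumes "step P (Eq s t # G) G'"
  obtains \<theta> where "rmgu \<theta> [s] [t]" "G' = gsubst \<theta> G"
  using assms by (cases rule: step.cases) auto

lemma eqs_ConsE:
  assumes "\<forall>a\<in>set E. is_eq a" and "E \<noteq> []"
  obtains s t E' where "E = Eq s t # E'"
proof (cases E)
  case (Cons a E')
  then show ?thesis
    using assms(1) that by (cases a) auto
qed (use assms(2) in simp)

lemma steps_resolve_eqs_prefix:
  assumes "\<forall>a\<in>set E. is_eq a" and "steps P (E @ G) (A # G')" and "nonbasic A"
  shows "\<exists>\<gamma>. mgu_on (gvars G) \<gamma> E \<and> steps P (gsubst \<gamma> G) (A # G')"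
  using assms
proof (induction "length E" arbitrary: E G)
  case 0
  then show ?case
    using mgu_on_Nil by fastforce
next
  case (Suc n)
  then obtain s t E' where E: "E = Eq s t # E'"
    by (auto elim: eqs_ConsE)
  then have "Eq s t # E' @ G \<noteq> A # G'"
    using Suc.prems(3) by auto
  then obtain G0 where "step P (Eq s t # E' @ G) G0" "steps P G0 (A # G')"
    using Suc.prems(2) E by (auto elim: converse_rtranclpE)
  then obtain \<theta> where \<theta>: "rmgu \<theta> [s] [t]" and "steps P (gsubst \<theta> E' @ gsubst \<theta> G) (A # G')"
    by (auto elim: step_EqE)
  moreover have "n = length (gsubst \<theta> E')" "\<forall>a\<in>set (gsubst \<theta> E'). is_eq a"
    using Suc.hyps(2) Suc.prems(1) E by (auto simp: gsubst_def)
  ultimately obtain \<eta> where \<eta>: "mgu_on (gvars (gsubst \<theta> G)) \<eta> (gsubst \<theta> E')"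
    and "steps P (gsubst \<eta> (gsubst \<theta> G)) (A # G')"
    using Suc.hyps(1) Suc.prems(3) by blast
  moreover have "mgu_on (gvars G) (subst_comp \<theta> \<eta>) E"
    unfolding E using mgu_on_Eq_ConsI[OF \<theta>] \<eta> by (simp add: gvars_gsubst)
  ultimately show ?case
    by auto
qed

text \<open>\<open>eqs_delayed X E Y G\<close>: the goal \<open>G\<close> of a derivation of \<open>E @ X @ Y\<close> in which the
  equations \<open>E\<close> have already been resolved is simulated by the goal \<open>X @ E @ Y\<close>, in which
  they are still pending.  The disequations of \<open>X\<close> must not share variables with \<open>E\<close>,
  so that selecting them before \<open>E\<close> gives the same result.\<close>
definition eqs_delayed ::
  "('p, 'f, 'v) goal \<Rightarrow> ('p, 'f, 'v) goal \<Rightarrow> ('p, 'f, 'v) goal \<Rightarrow> ('p, 'f, 'v) goal \<Rightarrow> bool" where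
  "eqs_delayed X E Y G \<longleftrightarrow> (\<forall>a\<in>set E. is_eq a) \<and> (E = [] \<or> neqs_local X E) \<and>
     (\<exists>\<gamma>. mgu_on (gvars (X @ Y)) \<gamma> E \<and> G = gsubst \<gamma> (X @ Y))"

lemma eqs_delayed_resolve_eqs:
  assumes "eqs_delayed [] E Y G"
  shows "\<exists>Y'. steps P (E @ Y) Y' \<and> eqs_delayed Y' [] [] G"
  using assms
proof (induction "length E" arbitrary: E Y)
  case 0
  then show ?case
    by (auto simp: eqs_delayed_def)
next
  case (Suc n)
  then obtain \<gamma> where eqs: "\<forall>a\<in>set E. is_eq a"
    and \<gamma>: "mgu_on (gvars Y) \<gamma> E" and G: "G = gsubst \<gamma> Y"
    by (auto simp: eqs_delayed_def)
  obtain s t E' where E: "E = Eq s t # E'"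
    using eqs Suc.hyps(2) by (auto elim: eqs_ConsE)
  then have "unifier \<gamma> [s] [t]"
    using mgu_onD(1)[OF \<gamma>] by (simp add: unifier_def)
  then obtain \<theta> where \<theta>: "rmgu \<theta> [s] [t]"
    using rmgu_exists by blast
  obtain \<eta> where \<eta>: "\<gamma> = subst_comp \<theta> \<eta>" and "mgu_on (gvars (gsubst \<theta> Y)) \<eta> (gsubst \<theta> E')"
    using mgu_on_Eq_ConsE[OF \<theta>] \<gamma> unfolding E by (metis gvars_gsubst)
  moreover have "n = length (gsubst \<theta> E')" "\<forall>a\<in>set (gsubst \<theta> E'). is_eq a"
    using Suc.hyps(2) eqs E by (auto simp: gsubst_def)
  ultimately have "eqs_delayed [] (gsubst \<theta> E') (gsubst \<theta> Y) G"
    using G by (auto simp: eqs_delayed_def neqs_local_def)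
  then obtain Y' where "steps P (gsubst \<theta> E' @ gsubst \<theta> Y) Y'" "eqs_delayed Y' [] [] G"
    using Suc.hyps(1) \<open>n = length (gsubst \<theta> E')\<close> by blast
  moreover have "step P (E @ Y) (gsubst \<theta> E' @ gsubst \<theta> Y)"
    using eq_step[OF \<theta>, of P "E' @ Y"] E by simp
  ultimately show ?case
    by (meson converse_rtranclp_into_rtranclp)
qed

lemma eqs_delayed_select:
  assumes "eqs_delayed X E Y G" and "G \<noteq> []"
  obtains a X' E' Y' where "steps P (X @ E @ Y) (a # X' @ E' @ Y')" "eqs_delayed (a # X') E' Y' G"
proof (cases X)
  case Nil
  then obtain Y' where Y': "steps P (E @ Y) Y'" "eqs_delayed Y' [] [] G"
    using eqs_delayed_resolve_eqs assms(1) by blast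
  moreover have "Y' \<noteq> []"
    using Y'(2) assms(2) by (auto simp: eqs_delayed_def)
  ultimately show ?thesis
    using that[of "hd Y'" "tl Y'" "[]" "[]"] Nil by simp
next
  case (Cons a X')
  then show ?thesis
    using that[of a X' E Y] assms(1) by simp
qed

lemma eqs_delayed_ConsE:
  assumes "eqs_delayed (a # X) E Y (b # G)"
  obtains \<gamma> where "mgu_on (gvars (a # X @ Y)) \<gamma> E" "b = asubst \<gamma> a" "G = gsubst \<gamma> (X @ Y)"
  using assms by (auto simp: eqs_delayed_def)

lemma eqs_delayed_Eq_step:
  assumes delayed: "eqs_delayed (Eq s t # X) E Y (Eq s' t' # G)" and \<theta>': "rmgu \<theta>' [s'] [t']"
  shows "\<exists>\<theta>. step P (Eq s t # X @ E @ Y) (gsubst \<theta> X @ gsubst \<theta> E @ gsubst \<theta> Y) \<and>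
    eqs_delayed (gsubst \<theta> X) (gsubst \<theta> E) (gsubst \<theta> Y) (gsubst \<theta>' G)"
proof -
  let ?V = "gvars (Eq s t # X @ Y)"
  obtain \<gamma> where \<gamma>: "mgu_on ?V \<gamma> E" and st': "s' = tsubst \<gamma> s" "t' = tsubst \<gamma> t"
    and G: "G = gsubst \<gamma> (X @ Y)"
    using delayed by (auto elim!: eqs_delayed_ConsE)
  have "unifier (subst_comp \<gamma> \<theta>') [s] [t]"
    using rmgu_unifier[OF \<theta>'] st' by (simp add: unifier_def)
  then obtain \<theta> where \<theta>: "rmgu \<theta> [s] [t]"
    using rmgu_exists by blast
  have "rmgu \<theta>' (map (tsubst \<gamma>) [s]) (map (tsubst \<gamma>) [t])"
    using \<theta>' st' by simp
  then obtain \<eta> where \<eta>: "subst_comp \<gamma> \<theta>' = subst_comp \<theta> \<eta>"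
    and mgu: "mgu_on (\<Union>x\<in>?V. tvars (\<theta> x)) \<eta> (gsubst \<theta> E)"
    by (rule mgu_on_resolve[OF \<gamma> \<theta>]) auto
  have "mgu_on (gvars (gsubst \<theta> X @ gsubst \<theta> Y)) \<eta> (gsubst \<theta> E)"
    using mgu by (rule mgu_on_subset) (auto simp: gvars_gsubst)
  moreover have "gsubst \<theta>' G = gsubst \<eta> (gsubst \<theta> X @ gsubst \<theta> Y)"
    using G \<eta> by (metis gsubst_simps(3) gsubst_subst_comp)
  moreover have "gsubst \<theta> E = [] \<or> neqs_local (gsubst \<theta> X) (gsubst \<theta> E)"
  proof (cases "E = []")
    case False
    then have "neqs_local (Eq s t # X) E"
      using delayed by (simp add: eqs_delayed_def)
    moreover have "svars \<theta> \<subseteq> avars (Eq s t) \<union> {}"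
      using \<theta> by (auto simp: rmgu_def)
    ultimately have "neqs_local (gsubst \<theta> ([] @ X)) (gsubst \<theta> E)"
      by (rule neqs_local_resolvent) auto
    then show ?thesis
      by simp
  qed simp
  moreover have "\<forall>a\<in>set (gsubst \<theta> E). is_eq a"
    using delayed by (auto simp: eqs_delayed_def gsubst_def)
  moreover have "step P (Eq s t # X @ E @ Y) (gsubst \<theta> X @ gsubst \<theta> E @ gsubst \<theta> Y)"
    using eq_step[OF \<theta>, of P "X @ E @ Y"] by simp
  ultimately show ?thesis
    unfolding eqs_delayed_def by blast
qed

lemma eqs_delayed_Neq_step:
  assumes delayed: "eqs_delayed (Neq s t # X) E Y (Neq s' t' # G)"
    and not_unifiable: "\<not> unifiable [s'] [t']"
  shows "step P (Neq s t # X @ E @ Y) (X @ E @ Y) \<and> eqs_delayed X E Y G"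
proof -
  let ?V = "gvars (Neq s t # X @ Y)"
  obtain \<gamma> where \<gamma>: "mgu_on ?V \<gamma> E" and st': "s' = tsubst \<gamma> s" "t' = tsubst \<gamma> t"
    and G: "G = gsubst \<gamma> (X @ Y)"
    using delayed by (auto elim!: eqs_delayed_ConsE)
  have local: "E = [] \<or> neqs_local (Neq s t # X) E"
    using delayed by (simp add: eqs_delayed_def)
  have "\<not> unifiable [s] [t]"
  proof
    assume "unifiable [s] [t]"
    then obtain \<sigma> where \<sigma>: "tsubst \<sigma> s = tsubst \<sigma> t"
      by (auto simp: unifiable_def unifier_def)
    define \<tau> where "\<tau> x = (if x \<in> tvars s \<union> tvars t then \<sigma> x else \<gamma> x)" for x
    have "(tvars s \<union> tvars t) \<inter> gvars E = {}" if "E \<noteq> []"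
      using local that neqs_local_def[of "Neq s t # X" E] by fastforce
    then have "unifies_eqs \<tau> E \<longleftrightarrow> unifies_eqs \<gamma> E"
      by (cases "E = []") (auto simp: \<tau>_def intro!: unifies_eqs_cong)
    then obtain \<zeta> where "\<forall>x\<in>?V. \<tau> x = subst_comp \<gamma> \<zeta> x"
      using mgu_onD[OF \<gamma>] by blast
    then have "tsubst \<tau> u = tsubst \<zeta> (tsubst \<gamma> u)" if "u \<in> {s, t}" for u
      using that tsubst_cong[of u \<tau> "subst_comp \<gamma> \<zeta>"] by auto
    moreover have "tsubst \<tau> s = tsubst \<tau> t"
      using \<sigma> tsubst_cong[of _ \<tau> \<sigma>] by (simp add: \<tau>_def)
    ultimately have "unifier \<zeta> [s'] [t']"
      using st' by (simp add: unifier_def)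
    then show False
      using not_unifiable by (auto simp: unifiable_def)
  qed
  then have "step P (Neq s t # X @ E @ Y) (X @ E @ Y)"
    by (rule neq_step)
  moreover have "mgu_on (gvars (X @ Y)) \<gamma> E"
    using \<gamma> by (rule mgu_on_subset) auto
  ultimately show ?thesis
    using delayed G neqs_local_Cons by (auto simp: eqs_delayed_def)
qed

lemma eqs_delayed_Pred_step:
  fixes P :: "('p, 'f, 'v::infinite) program"
  assumes safe: "safe M P" and delayed: "eqs_delayed (Pred p ts # X) E Y (Pred p ts' # G)"
    and sat: "satisfies M (Pred p ts)"
    and C: "C \<in> P" and \<rho>': "bij \<rho>'" and C': "C' = rename_clause \<rho>' C"
    and fresh': "cvars C' \<inter> gvars (Pred p ts' # G) = {}" and hd': "hd_pred C' = p"
    and \<theta>': "rmgu \<theta>' ts' (hd_args C')"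
  shows "\<exists>X' E' Y'. step P (Pred p ts # X @ E @ Y) (X' @ E' @ Y') \<and>
    eqs_delayed X' E' Y' (gsubst \<theta>' (bd C' @ G))"
proof -
  let ?V = "gvars (Pred p ts # X @ Y)"
  obtain \<gamma> where \<gamma>: "mgu_on ?V \<gamma> E" and ts': "ts' = map (tsubst \<gamma>) ts"
    and G: "G = gsubst \<gamma> (X @ Y)"
    using delayed by (auto elim!: eqs_delayed_ConsE)
  have "gvars (Pred p ts' # G) = (\<Union>x\<in>?V. tvars (\<gamma> x))"
    unfolding ts' G gvars_gsubst[symmetric] by simp
  then have fresh': "cvars (rename_clause \<rho>' C) \<inter> (\<Union>x\<in>?V. tvars (\<gamma> x)) = {}"
    using fresh' C' by simp
  obtain \<rho> \<gamma>' where \<rho>: "bij \<rho>"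
    and fresh: "cvars (rename_clause \<rho> C) \<inter> gvars (Pred p ts # X @ E @ Y) = {}"
    and \<gamma>': "mgu_on (?V \<union> cvars (rename_clause \<rho> C)) \<gamma>' E" and agree: "\<forall>x\<in>?V. \<gamma>' x = \<gamma> x"
    and hd_Cl: "map (tsubst \<gamma>') (hd_args (rename_clause \<rho> C)) = hd_args C'"
    and bd_Cl: "gsubst \<gamma>' (bd (rename_clause \<rho> C)) = bd C'"
    using mgu_on_rename_clause_apart[OF \<gamma> \<rho>' fresh', of "gvars (Pred p ts # X @ E @ Y)"] C'
    by auto
  define Cl where "Cl = rename_clause \<rho> C"
  note fresh = fresh[folded Cl_def] and \<gamma>' = \<gamma>'[folded Cl_def]
    and hd_Cl = hd_Cl[folded Cl_def] and bd_Cl = bd_Cl[folded Cl_def]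
  have ts_Cl: "map (tsubst \<gamma>') ts = ts'"
    unfolding ts' using agree by (auto intro!: tsubst_cong)
  have XY_Cl: "gsubst \<gamma>' (X @ Y) = G"
    unfolding G using agree by (intro gsubst_cong) auto
  have "unifier (subst_comp \<gamma>' \<theta>') ts (hd_args Cl)"
    using rmgu_unifier[OF \<theta>'] ts_Cl hd_Cl by (simp add: unifier_def)
  then obtain \<theta> where \<theta>: "rmgu \<theta> ts (hd_args Cl)"
    using rmgu_exists by blast
  have "rmgu \<theta>' (map (tsubst \<gamma>') ts) (map (tsubst \<gamma>') (hd_args Cl))"
    using \<theta>' ts_Cl hd_Cl by simp
  then obtain \<eta> where \<eta>: "subst_comp \<gamma>' \<theta>' = subst_comp \<theta> \<eta>"
    and mgu: "mgu_on (\<Union>x\<in>?V \<union> cvars Cl. tvars (\<theta> x)) \<eta> (gsubst \<theta> E)"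
    by (rule mgu_on_resolve[OF \<gamma>' \<theta>]) (auto simp: cvars_def)
  have hd_Cl_p: "hd_pred Cl = p"
    using hd' by (simp add: Cl_def C')
  let ?X' = "gsubst \<theta> (bd Cl @ X)"
  have "step P (Pred p ts # X @ E @ Y) (?X' @ gsubst \<theta> E @ gsubst \<theta> Y)"
    using pred_step[OF C \<rho> Cl_def fresh _ \<theta>] hd' by (simp add: Cl_def C')
  moreover have "mgu_on (gvars (?X' @ gsubst \<theta> Y)) \<eta> (gsubst \<theta> E)"
    using mgu by (rule mgu_on_subset) (auto simp: gvars_gsubst cvars_def)
  moreover have "gsubst \<theta>' (bd C' @ G) = gsubst \<eta> (?X' @ gsubst \<theta> Y)"
    using bd_Cl XY_Cl \<eta> by (metis append.assoc gsubst_simps(3) gsubst_subst_comp)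
  moreover have "gsubst \<theta> E = [] \<or> neqs_local ?X' (gsubst \<theta> E)"
  proof (cases "E = []")
    case False
    have "neqs_local ?X' (gsubst \<theta> E)"
    proof (rule neqs_local_clause_resolvent)
      show "safe_clause M Cl"
        using safe C \<rho> unfolding safe_def Cl_def by (blast intro: safe_clause_rename)
      show "satisfies M (Pred (hd_pred Cl) ts)" "rmgu \<theta> ts (hd_args Cl)"
        using sat \<theta> hd_Cl_p by simp_all
      show "cvars Cl \<inter> gvars (Pred (hd_pred Cl) ts # X @ E) = {}"
        using fresh by auto
      show "neqs_local (Pred (hd_pred Cl) ts # X) E"
        using delayed False hd_Cl_p by (simp add: eqs_delayed_def)
    qed
    then show ?thesis
      by simp
  qed simp
  moreover have "\<forall>a\<in>set (gsubst \<theta> E). is_eq a"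
    using delayed by (auto simp: eqs_delayed_def gsubst_def)
  ultimately show ?thesis
    unfolding eqs_delayed_def by blast
qed

lemma eqs_delayed_step:
  fixes P :: "('p, 'f, 'v::infinite) program"
  assumes safe: "safe M P" and delayed: "eqs_delayed (a # X) E Y G" and step: "step P G G'"
    and moded: "nonbasic a \<Longrightarrow> satisfies M a"
  shows "\<exists>X' E' Y'. step P (a # X @ E @ Y) (X' @ E' @ Y') \<and> eqs_delayed X' E' Y' G'"
proof -
  obtain \<gamma> where G: "G = asubst \<gamma> a # gsubst \<gamma> (X @ Y)"
    using delayed by (auto simp: eqs_delayed_def)
  from step show ?thesis
  proof cases
    case (eq_step \<theta> s' t' G0)
    then obtain s t where "a = Eq s t"
      using G by (auto simp: asubst_eq_Eq_iff)
    then show ?thesis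
      using eqs_delayed_Eq_step[of s t X E Y s' t' G0 \<theta> P] delayed eq_step by auto
  next
    case (neq_step s' t')
    then obtain s t where "a = Neq s t"
      using G by (auto simp: asubst_eq_Neq_iff)
    then show ?thesis
      using eqs_delayed_Neq_step[of s t X E Y s' t' G' P] delayed neq_step by blast
  next
    case (pred_step C \<rho> C' p ts' G0 \<theta>)
    then obtain ts where "a = Pred p ts"
      using G by (auto simp: asubst_eq_Pred_iff)
    then show ?thesis
      using eqs_delayed_Pred_step[OF safe, of p ts X E Y ts' G0 C \<rho> C' \<theta>] delayed pred_step moded
      by auto
  qed
qed

definition reaches_mode_violation ::
  "('p, 'f, 'v) program \<Rightarrow> 'p mode \<Rightarrow> ('p, 'f, 'v) goal \<Rightarrow> bool" where
  "reaches_mode_violation P M G \<longleftrightarrow>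
     (\<exists>A G'. nonbasic A \<and> \<not> satisfies M A \<and> steps P G (A # G'))"

lemma reaches_mode_violation_steps:
  "steps P G G' \<Longrightarrow> reaches_mode_violation P M G' \<Longrightarrow> reaches_mode_violation P M G"
  by (auto simp: reaches_mode_violation_def intro: rtranclp_trans)

lemma eqs_delayed_reaches_mode_violation:
  fixes P :: "('p, 'f, 'v::infinite) program"
  assumes safe: "safe M P" and "reaches_mode_violation P M G" and "eqs_delayed X E Y G"
  shows "reaches_mode_violation P M (X @ E @ Y)"
proof -
  obtain A G' where A: "nonbasic A" "\<not> satisfies M A" and "steps P G (A # G')"
    using assms(2) by (auto simp: reaches_mode_violation_def)
  from this(3) assms(3) show ?thesis
  proof (induction arbitrary: X E Y rule: converse_rtranclp_induct)
    case base
    then obtain a X' E' Y' where steps: "steps P (X @ E @ Y) (a # X' @ E' @ Y')"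
      and "eqs_delayed (a # X') E' Y' (A # G')"
      using eqs_delayed_select by blast
    then obtain \<gamma> where "A = asubst \<gamma> a"
      by (auto simp: eqs_delayed_def)
    then have "nonbasic a" "\<not> satisfies M a"
      using A satisfies_asubst by auto
    then show ?case
      using steps by (auto simp: reaches_mode_violation_def)
  next
    case (step G G1)
    have "G \<noteq> []"
      using step.hyps(1) by (auto elim: step.cases)
    then obtain a X' E' Y' where steps: "steps P (X @ E @ Y) (a # X' @ E' @ Y')"
      and delayed: "eqs_delayed (a # X') E' Y' G"
      using eqs_delayed_select step.prems by blast
    show ?case
    proof (cases "nonbasic a \<longrightarrow> satisfies M a")
      case True
      then obtain X'' E'' Y'' where "step P (a # X' @ E' @ Y') (X'' @ E'' @ Y'')"
        and "eqs_delayed X'' E'' Y'' G1"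
        using eqs_delayed_step[OF safe delayed step.hyps(1)] by blast
      then have "steps P (X @ E @ Y) (X'' @ E'' @ Y'')"
        and "reaches_mode_violation P M (X'' @ E'' @ Y'')"
        using steps step.IH by auto
      then show ?thesis
        by (rule reaches_mode_violation_steps)
    next
      case False
      then show ?thesis
        using steps by (auto simp: reaches_mode_violation_def)
    qed
  qed
qed

theorem lemma2:
  fixes P :: "('p, 'f, 'v::infinite) program"
    and M :: "'p mode"
    and Eqs G1 G2 :: "('p, 'f, 'v) goal"
  assumes "is_mode M"
    and "safe M P"
    and "\<forall>a\<in>set Eqs. is_eq a"
    and "\<forall>a\<in>set G1. \<not> is_neq a"
    and "\<exists>A' G'. nonbasic A' \<and> \<not> satisfies M A' \<and> steps P (Eqs @ G1 @ G2) (A' # G')"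
  shows "\<exists>A'' G''. nonbasic A'' \<and> \<not> satisfies M A'' \<and> steps P (G1 @ Eqs @ G2) (A'' # G'')"
proof -
  obtain A' G' where A': "nonbasic A'" "\<not> satisfies M A'" "steps P (Eqs @ G1 @ G2) (A' # G')"
    using assms(5) by blast
  then obtain \<gamma> where \<gamma>: "mgu_on (gvars (G1 @ G2)) \<gamma> Eqs"
    and "steps P (gsubst \<gamma> (G1 @ G2)) (A' # G')"
    using steps_resolve_eqs_prefix[OF assms(3)] by blast
  then have "reaches_mode_violation P M (gsubst \<gamma> (G1 @ G2))"
    using A' by (auto simp: reaches_mode_violation_def)
  moreover have "eqs_delayed G1 Eqs G2 (gsubst \<gamma> (G1 @ G2))"
    using assms(3,4) \<gamma> neqs_local_if_no_neqs by (auto simp: eqs_delayed_def)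
  ultimately show ?thesis
    using eqs_delayed_reaches_mode_violation[OF assms(2)] by (auto simp: reaches_mode_violation_def)
qed

end
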